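(* Let $\mathscr{F}=(\Omega,\sqsubseteq,\mathcal{E},\mathcal{A})$ where $(\Omega,\sqsubseteq,\mathcal{E})$ is a quasi-principal possibility frame whose poset has a maximum element, and $\mathcal{A}:\Omega\to\wp(\Omega)$ satisfies awareness expressibility: for all $\omega,\nu$, if $\nu\in\mathcal{A}(\omega)$ then $\downarrow\nu\in\mathcal{E}$. Consider the conditions: (i) (awareness joinability) for all $\omega,\nu\in\Omega$ and $E,E'\in\mathcal{E}$, if $\nu\in\mathcal{A}(\omega)$ and $\max(E\cap\downarrow\nu)\cup\max(E'\cap\downarrow\nu)\subseteq\mathcal{A}(\omega)$, then $\max((E\sqcup E')\cap\downarrow\nu)\subseteq\mathcal{A}(\omega)$; (ii) for all $\omega,\nu\in\Omega$ with $\nu\in\mathcal{A}(\omega)$, all $n\ge1$ and all $\nu_1,\dots,\nu_n\in\mathcal{A}(\omega)\cap\downarrow\nu$, we have $\max((\downarrow\nu_1\sqcup\dots\sqcup\downarrow\nu_n)\cap\downarrow\nu)\subseteq\mathcal{A}(\omega)$. Then (i) implies (ii). Conversely, if $\max(E)$ is finite for each $E\in\mathcal{E}$, then (ii) implies (i).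
   Context: For a poset $(\Omega,\sqsubseteq)$, $\downarrow E=\{\omega\mid\omega\sqsubseteq\nu\text{ for some }\nu\in E\}$, $\downarrow\nu=\downarrow\{\nu\}$; $\rho(E)=\{\omega\mid\forall\omega'\sqsubseteq\omega\ \exists\omega''\sqsubseteq\omega'\colon\omega''\in\downarrow E\}$; $\mathcal{RO}(\Omega,\sqsubseteq)=\{E\mid\rho(E)=E\}$ is a Boolean algebra under $\subseteq$ with meet $\cap$, join $E\sqcup F=\rho(E\cup F)$ and complement $\neg E=\{\omega\mid\forall\omega'\sqsubseteq\omega,\ \omega'\notin E\}$. $\max(E)=\{\omega\in E\mid\text{no }\nu\in E\text{ with }\omega\sqsubseteq\nu,\ \nu\not\sqsubseteq\omega\}$. A possibility frame $(\Omega,\sqsubseteq,\mathcal{E})$: $(\Omega,\sqsubseteq)$ a poset and $\mathcal{E}$ a nonempty subset of $\mathcal{RO}(\Omega,\sqsubseteq)$ closed under binary $\cap$ and $\neg$; it is quasi-principal if for every $E\in\mathcal{E}$ and $\omega\in E$, $\omega\in\downarrow\max(E)$. *)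

theory Defs
  imports Main
begin

text \<open>A poset is represented by a type 'a (the set Omega = UNIV) together with a
 relation le (the order "sqsubseteq").\<close>

definition poset :: "('a \<Rightarrow> 'a \<Rightarrow> bool) \<Rightarrow> bool" where
  "poset le \<longleftrightarrow> (\<forall>x. le x x) \<and> (\<forall>x y z. le x y \<longrightarrow> le y z \<longrightarrow> le x z)
     \<and> (\<forall>x y. le x y \<longrightarrow> le y x \<longrightarrow> x = y)"

definition down :: "('a \<Rightarrow> 'a \<Rightarrow> bool) \<Rightarrow> 'a set \<Rightarrow> 'a set" where
  "down le E = {w. \<exists>v\<in>E. le w v}"

definition rho :: "('a \<Rightarrow> 'a \<Rightarrow> bool) \<Rightarrow> 'a set \<Rightarrow> 'a set" where
  "rho le E = {w. \<forall>w'. le w' w \<longrightarrow> (\<exists>w''. le w'' w' \<and> w'' \<in> down le E)}"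

definition RO :: "('a \<Rightarrow> 'a \<Rightarrow> bool) \<Rightarrow> 'a set set" where
  "RO le = {E. rho le E = E}"

definition join :: "('a \<Rightarrow> 'a \<Rightarrow> bool) \<Rightarrow> 'a set \<Rightarrow> 'a set \<Rightarrow> 'a set" where
  "join le E F = rho le (E \<union> F)"

definition neg :: "('a \<Rightarrow> 'a \<Rightarrow> bool) \<Rightarrow> 'a set \<Rightarrow> 'a set" where
  "neg le E = {w. \<forall>w'. le w' w \<longrightarrow> w' \<notin> E}"

definition maxs :: "('a \<Rightarrow> 'a \<Rightarrow> bool) \<Rightarrow> 'a set \<Rightarrow> 'a set" where
  "maxs le E = {w\<in>E. \<not> (\<exists>v\<in>E. le w v \<and> \<not> le v w)}"

definition possibility_frame :: "('a \<Rightarrow> 'a \<Rightarrow> bool) \<Rightarrow> 'a set set \<Rightarrow> bool" where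
  "possibility_frame le Es \<longleftrightarrow> poset le \<and> Es \<noteq> {} \<and> Es \<subseteq> RO le
     \<and> (\<forall>E\<in>Es. \<forall>F\<in>Es. E \<inter> F \<in> Es) \<and> (\<forall>E\<in>Es. neg le E \<in> Es)"

definition quasi_principal :: "('a \<Rightarrow> 'a \<Rightarrow> bool) \<Rightarrow> 'a set set \<Rightarrow> bool" where
  "quasi_principal le Es \<longleftrightarrow> (\<forall>E\<in>Es. \<forall>w\<in>E. w \<in> down le (maxs le E))"

definition has_maximum :: "('a \<Rightarrow> 'a \<Rightarrow> bool) \<Rightarrow> bool" where
  "has_maximum le \<longleftrightarrow> (\<exists>m. \<forall>w. le w m)"

definition awareness_expressible ::
  "('a \<Rightarrow> 'a \<Rightarrow> bool) \<Rightarrow> 'a set set \<Rightarrow> ('a \<Rightarrow> 'a set) \<Rightarrow> bool" where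
  "awareness_expressible le Es A \<longleftrightarrow> (\<forall>w v. v \<in> A w \<longrightarrow> down le {v} \<in> Es)"

definition awareness_joinable ::
  "('a \<Rightarrow> 'a \<Rightarrow> bool) \<Rightarrow> 'a set set \<Rightarrow> ('a \<Rightarrow> 'a set) \<Rightarrow> bool" where
  "awareness_joinable le Es A \<longleftrightarrow>
     (\<forall>w v. \<forall>E\<in>Es. \<forall>E'\<in>Es. v \<in> A w \<longrightarrow>
        maxs le (E \<inter> down le {v}) \<union> maxs le (E' \<inter> down le {v}) \<subseteq> A w \<longrightarrow>
        maxs le (join le E E' \<inter> down le {v}) \<subseteq> A w)"

fun joins :: "('a \<Rightarrow> 'a \<Rightarrow> bool) \<Rightarrow> 'a list \<Rightarrow> 'a set" where
  "joins le [] = {}"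
| "joins le [x] = down le {x}"
| "joins le (x # y # xs) = join le (down le {x}) (joins le (y # xs))"

definition finite_join_condition ::
  "('a \<Rightarrow> 'a \<Rightarrow> bool) \<Rightarrow> ('a \<Rightarrow> 'a set) \<Rightarrow> bool" where
  "finite_join_condition le A \<longleftrightarrow>
     (\<forall>w v xs. v \<in> A w \<longrightarrow> xs \<noteq> [] \<longrightarrow> set xs \<subseteq> A w \<inter> down le {v} \<longrightarrow>
        maxs le (joins le xs \<inter> down le {v}) \<subseteq> A w)"

end

theory Submission
  imports Defs
begin

text \<open>For (i) \<Longrightarrow> (ii) one inducts on n: awareness expressibility puts each
  \<open>\<down>\<nu>\<^sub>i\<close> into \<open>\<E>\<close>, the join of elements of \<open>\<E>\<close> stays in \<open>\<E>\<close>, and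
  \<open>max(\<down>\<nu>\<^sub>i \<inter> \<down>\<nu>) = {\<nu>\<^sub>i}\<close>, so awareness joinability applies at every step.
  For (ii) \<Longrightarrow> (i), quasi-principality gives \<open>\<down>max(F) = \<down>F\<close> for \<open>F \<in> \<E>\<close>. Hence for
  the finite set \<open>M = max(E \<inter> \<down>\<nu>) \<union> max(E' \<inter> \<down>\<nu>)\<close> we get
  \<open>(E \<squnion> E') \<inter> \<down>\<nu> = \<rho>(M) \<inter> \<down>\<nu>\<close>, and \<open>\<rho>(M)\<close> is the join of the \<open>\<down>\<mu>\<close>, \<open>\<mu> \<in> M\<close>,
  to which (ii) applies.\<close>

lemma down_Un: "down le (X \<union> Y) = down le X \<union> down le Y"
  unfolding down_def by blast

lemma neg_Un: "neg le (X \<union> Y) = neg le X \<inter> neg le Y"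
  unfolding neg_def by blast

lemma rho_mono: "X \<subseteq> Y \<Longrightarrow> rho le X \<subseteq> rho le Y"
  unfolding rho_def down_def by blast

lemma rho_eq_neg_neg_down: "rho le X = neg le (neg le (down le X))"
  unfolding rho_def neg_def by blast

context
  fixes le :: "'a \<Rightarrow> 'a \<Rightarrow> bool"
  assumes poset: "poset le"
begin

lemma poset_refl: "le x x"
  using poset unfolding poset_def by blast

lemma poset_trans: "le x y \<Longrightarrow> le y z \<Longrightarrow> le x z"
  using poset unfolding poset_def by blast

lemma poset_antisym: "le x y \<Longrightarrow> le y x \<Longrightarrow> x = y"
  using poset unfolding poset_def by blast

lemma subset_down: "X \<subseteq> down le X"
  unfolding down_def using poset_refl by blast

lemma down_idem: "down le (down le X) = down le X"
  using subset_down unfolding down_def by (blast intro: poset_trans)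

lemma down_singleton_Int_down_singleton: "le x v \<Longrightarrow> down le {x} \<inter> down le {v} = down le {x}"
  unfolding down_def by (blast intro: poset_trans)

lemma maxs_down_singleton: "maxs le (down le {x}) = {x}"
  unfolding maxs_def down_def by (auto intro: poset_refl poset_antisym)

lemma subset_rho: "X \<subseteq> rho le X"
  unfolding rho_def down_def using poset_refl by blast

lemma rho_empty: "rho le {} = {}"
  unfolding rho_def down_def using poset_refl by blast

lemma down_rho: "down le (rho le X) = rho le X"
proof
  show "down le (rho le X) \<subseteq> rho le X"
  proof
    fix u assume "u \<in> down le (rho le X)"
    then obtain x where "le u x" "x \<in> rho le X" unfolding down_def by blast
    then show "u \<in> rho le X" unfolding rho_def by (blast intro: poset_trans)
  qed
qed (rule subset_down)

lemma rho_down: "rho le (down le X) = rho le X"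
  unfolding rho_eq_neg_neg_down[of le] down_idem ..

lemma rho_idem: "rho le (rho le X) = rho le X"
proof
  show "rho le (rho le X) \<subseteq> rho le X"
  proof
    fix u assume u: "u \<in> rho le (rho le X)"
    have "\<exists>w''. le w'' u' \<and> w'' \<in> down le X" if "le u' u" for u'
    proof -
      obtain a where "le a u'" "a \<in> rho le X"
        using u \<open>le u' u\<close> unfolding rho_def[of le "rho le X"] down_rho by blast
      then obtain b where "le b a" "b \<in> down le X"
        using poset_refl unfolding rho_def by blast
      then show ?thesis using poset_trans[OF \<open>le b a\<close> \<open>le a u'\<close>] by blast
    qed
    then show "u \<in> rho le X" unfolding rho_def by blast
  qed
qed (rule subset_rho)

lemma rho_Un_rho: "rho le (X \<union> rho le Y) = rho le (X \<union> Y)"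
proof
  have "X \<union> rho le Y \<subseteq> rho le (X \<union> Y)"
    using subset_rho rho_mono[of Y "X \<union> Y" le] by blast
  then show "rho le (X \<union> rho le Y) \<subseteq> rho le (X \<union> Y)"
    using rho_mono[of "X \<union> rho le Y" "rho le (X \<union> Y)" le] by (simp only: rho_idem)
  show "rho le (X \<union> Y) \<subseteq> rho le (X \<union> rho le Y)"
    by (rule rho_mono) (use subset_rho in blast)
qed

lemma RO_down: "E \<in> RO le \<Longrightarrow> down le E = E"
  unfolding RO_def using down_rho[of E] by simp

lemma rho_Int_down_closed:
  assumes "down le D = D"
  shows "rho le X \<inter> D = rho le (down le X \<inter> D) \<inter> D"
proof
  show "rho le (down le X \<inter> D) \<inter> D \<subseteq> rho le X \<inter> D"
    using rho_mono[of "down le X \<inter> D" "down le X" le] rho_down by blast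
  show "rho le X \<inter> D \<subseteq> rho le (down le X \<inter> D) \<inter> D"
  proof
    fix u assume u: "u \<in> rho le X \<inter> D"
    have "\<exists>u''. le u'' u' \<and> u'' \<in> down le (down le X \<inter> D)" if "le u' u" for u'
    proof -
      obtain u'' where "le u'' u'" "u'' \<in> down le X"
        using u \<open>le u' u\<close> unfolding rho_def by blast
      moreover have "u'' \<in> down le D"
        using u poset_trans[OF \<open>le u'' u'\<close> \<open>le u' u\<close>] unfolding down_def by blast
      then have "u'' \<in> D" using assms by simp
      ultimately show ?thesis using subset_down by blast
    qed
    then show "u \<in> rho le (down le X \<inter> D) \<inter> D"
      using u unfolding rho_def by blast
  qed
qed

lemma joins_eq_rho_set:
  assumes "xs \<noteq> []" and "\<forall>x\<in>set xs. down le {x} \<in> RO le"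
  shows "joins le xs = rho le (set xs)"
  using assms
proof (induction xs rule: induct_list012)
  case (2 x)
  then show ?case using rho_down[of "{x}"] unfolding RO_def by simp
next
  case (3 x y xs)
  have "joins le (x # y # xs) = rho le (down le {x} \<union> rho le (set (y # xs)))"
    using 3 by (simp add: join_def)
  also have "\<dots> = rho le (down le (down le {x} \<union> set (y # xs)))"
    by (simp only: rho_Un_rho rho_down)
  also have "\<dots> = rho le (down le ({x} \<union> set (y # xs)))"
    by (simp only: down_Un down_idem)
  also have "\<dots> = rho le (set (x # y # xs))"
    by (simp add: rho_down insert_commute)
  finally show ?case .
qed simp

end


lemma possibility_frame_join_closed:
  assumes frame: "possibility_frame le Es" and "E \<in> Es" "F \<in> Es"
  shows "join le E F \<in> Es"
proof -
  have "poset le" "E \<in> RO le" "F \<in> RO le"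
    using assms unfolding possibility_frame_def by auto
  then have "join le E F = neg le (neg le E \<inter> neg le F)"
    unfolding join_def rho_eq_neg_neg_down[of le] down_Un neg_Un by (simp add: RO_down)
  then show ?thesis using assms unfolding possibility_frame_def by simp
qed

lemma joins_in_frame:
  assumes "possibility_frame le Es" and "xs \<noteq> []" and "\<forall>x\<in>set xs. down le {x} \<in> Es"
  shows "joins le xs \<in> Es"
  using assms(2,3)
  by (induction xs rule: induct_list012) (auto intro: possibility_frame_join_closed[OF assms(1)])

lemma quasi_principal_down_maxs:
  assumes "poset le" and "quasi_principal le Es" and "F \<in> Es"
  shows "down le (maxs le F) = down le F"
proof
  show "down le (maxs le F) \<subseteq> down le F"
    unfolding down_def maxs_def by blast
  show "down le F \<subseteq> down le (maxs le F)"
  proof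
    fix u assume "u \<in> down le F"
    then obtain x where "le u x" "x \<in> F" unfolding down_def by blast
    then obtain m where "le x m" "m \<in> maxs le F"
      using assms(2,3) unfolding quasi_principal_def down_def by blast
    then show "u \<in> down le (maxs le F)"
      using poset_trans[OF assms(1) \<open>le u x\<close>] unfolding down_def by blast
  qed
qed

lemma join_Int_eq_rho_maxs:
  assumes frame: "possibility_frame le Es" and qp: "quasi_principal le Es"
    and Es: "E \<in> Es" "E' \<in> Es" "D \<in> Es"
  shows "join le E E' \<inter> D = rho le (maxs le (E \<inter> D) \<union> maxs le (E' \<inter> D)) \<inter> D"
proof -
  have p: "poset le" and Int: "E \<inter> D \<in> Es" "E' \<inter> D \<in> Es"
    using assms unfolding possibility_frame_def by auto
  have down_eq: "down le F = F" if "F \<in> Es" for F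
    using that frame RO_down[OF p] unfolding possibility_frame_def by blast
  have "join le E E' \<inter> D = rho le (down le (E \<union> E') \<inter> D) \<inter> D"
    unfolding join_def using rho_Int_down_closed[OF p down_eq[OF Es(3)]] .
  also have "down le (E \<union> E') \<inter> D = down le (E \<inter> D) \<union> down le (E' \<inter> D)"
    using Es Int by (simp add: down_Un down_eq Int_Un_distrib2)
  also have "\<dots> = down le (maxs le (E \<inter> D) \<union> maxs le (E' \<inter> D))"
    by (simp add: down_Un quasi_principal_down_maxs[OF p qp] Int)
  finally show ?thesis by (simp only: rho_down[OF p])
qed

lemma awareness_joinable_imp_finite_join_condition:
  assumes frame: "possibility_frame le Es"
    and expr: "awareness_expressible le Es A"
    and joinable: "awareness_joinable le Es A"
  shows "finite_join_condition le A"
  unfolding finite_join_condition_def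
proof (intro allI impI)
  fix w v xs
  assume v: "v \<in> A w" and "xs \<noteq> []" and xs: "set xs \<subseteq> A w \<inter> down le {v}"
  have p: "poset le" using frame unfolding possibility_frame_def by blast
  have down_Es: "down le {x} \<in> Es" if "x \<in> set xs" for x
    using that xs expr unfolding awareness_expressible_def by blast
  have maxs_aware: "maxs le (down le {x} \<inter> down le {v}) \<subseteq> A w" if "x \<in> set xs" for x
  proof -
    have "le x v" "x \<in> A w" using that xs unfolding down_def by auto
    then show ?thesis
      by (simp add: down_singleton_Int_down_singleton[OF p] maxs_down_singleton[OF p])
  qed
  show "maxs le (joins le xs \<inter> down le {v}) \<subseteq> A w"
    using \<open>xs \<noteq> []\<close> down_Es maxs_aware
  proof (induction xs rule: induct_list012)
    case (3 x y xs)
    then show ?case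
      using joinable v joins_in_frame[OF frame, of "y # xs"]
      unfolding awareness_joinable_def by simp
  qed simp_all
qed

lemma finite_join_condition_imp_awareness_joinable:
  assumes frame: "possibility_frame le Es" and qp: "quasi_principal le Es"
    and expr: "awareness_expressible le Es A"
    and finite_maxs: "\<forall>E\<in>Es. finite (maxs le E)"
    and fjc: "finite_join_condition le A"
  shows "awareness_joinable le Es A"
  unfolding awareness_joinable_def
proof (intro allI ballI impI)
  fix w v E E'
  define M where "M = maxs le (E \<inter> down le {v}) \<union> maxs le (E' \<inter> down le {v})"
  assume E: "E \<in> Es" "E' \<in> Es" and v: "v \<in> A w" and "M \<subseteq> A w"
  have p: "poset le" and RO: "Es \<subseteq> RO le"
    using frame unfolding possibility_frame_def by auto
  have down_Es: "down le {x} \<in> Es" if "x \<in> A w" for x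
    using that expr unfolding awareness_expressible_def by blast
  have join_eq: "join le E E' \<inter> down le {v} = rho le M \<inter> down le {v}"
    unfolding M_def by (rule join_Int_eq_rho_maxs[OF frame qp E down_Es[OF v]])
  have "finite M"
    using finite_maxs E down_Es[OF v] frame unfolding M_def possibility_frame_def by auto
  then obtain xs where xs: "set xs = M" using finite_list by blast
  show "maxs le (join le E E' \<inter> down le {v}) \<subseteq> A w"
  proof (cases "xs = []")
    case True
    then show ?thesis using join_eq xs rho_empty[OF p] by (simp add: maxs_def)
  next
    case False
    have "M \<subseteq> down le {v}"
      unfolding M_def maxs_def by blast
    then have "maxs le (joins le xs \<inter> down le {v}) \<subseteq> A w"
      using fjc v False xs \<open>M \<subseteq> A w\<close> unfolding finite_join_condition_def by blast
    moreover have "joins le xs = rho le M"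
      using joins_eq_rho_set[OF p False] xs \<open>M \<subseteq> A w\<close> down_Es RO by blast
    ultimately show ?thesis using join_eq by simp
  qed
qed

theorem lemma3p2:
  fixes le :: "'a \<Rightarrow> 'a \<Rightarrow> bool" and Es :: "'a set set" and A :: "'a \<Rightarrow> 'a set"
  assumes "possibility_frame le Es"
    and "quasi_principal le Es"
    and "has_maximum le"
    and "awareness_expressible le Es A"
  shows "(awareness_joinable le Es A \<longrightarrow> finite_join_condition le A)
    \<and> ((\<forall>E\<in>Es. finite (maxs le E)) \<longrightarrow> finite_join_condition le A \<longrightarrow> awareness_joinable le Es A)"
  using awareness_joinable_imp_finite_join_condition[OF assms(1,4)]
    finite_join_condition_imp_awareness_joinable[OF assms(1,2,4)]
  by blast

end
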